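(* For every $d$ with $0\le d\le\rho(m)-1$, the sequence $(w(n,d))_{n\ge0}$ has transient length $\rho(m)\,(k-p_d-1)+d+1$ and cycle length $L_0(d)$.
   Context: For $u\in\mathbb{R}$ let $\mathbf 1[u]=1$ if $u\ge 0$ and $\mathbf 1[u]=0$ if $u<0$. For a $\{0,1\}$-valued sequence $(s(n))_{n\ge0}$ that is eventually periodic, its transient length is the least $T\ge0$ such that there is $P\ge1$ with $s(n+P)=s(n)$ for all $n\ge T$, and its cycle length is the least such $P$ (for that $T$). Let $m$ be a positive integer and let $\rho(m)$ denote the number of primes $p$ with $2m<p<3m$; assume $\rho(m)\ge 2$. List these primes as $p_0>p_1>\dots>p_{\rho(m)-1}$ and put $\alpha_i=3m-p_i$. Let $k=(6m-1)\rho(m)$, $\mu_i=\lfloor k/p_i\rfloor$, $\beta_i=k-p_i\mu_i$. Define weights $\bar a_j$, $1\le j\le k$: if $\rho(m)$ is even, $\bar a_j=2$ if $j=\ell p_i$ for some $i$ and some $\ell$ with $1\le \ell\le 3\rho(m)/2$, $\bar a_j=-2$ if $j=\ell p_i$ with $3\rho(m)/2<\ell\le 2\rho(m)$, and $\bar a_j=0$ otherwise; if $\rho(m)$ is odd, $\bar a_j=2$ if $j=\ell p_i$ with $1\le\ell\le (3\rho(m)-1)/2$, $\bar a_j=-2$ if $j=\ell p_i$ with $(3\rho(m)+1)/2\le \ell\le 2\rho(m)-2$, $\bar a_j=-1$ if $j=\ell p_i$ with $\ell\in\{2\rho(m)-1,2\rho(m)\}$, and $\bar a_j=0$ otherwise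 (well defined since the sets $\{\ell p_i:1\le\ell\le2\rho(m)\}$ are pairwise disjoint). Let $\bar\theta=2\rho(m)$. For each $i$ define $x^{\alpha_i}(t)$ for $0\le t\le k-1$ by $x^{\alpha_i}(t)=1$ if $t=\beta_i+\ell p_i$ for some $0\le \ell\le\mu_i-1$ and $x^{\alpha_i}(t)=0$ otherwise, and for $t\ge k$ by $x^{\alpha_i}(t)=\mathbf 1\big[\sum_{j=1}^k \bar a_j x^{\alpha_i}(t-j)-\bar\theta\big]$. Let $h=\rho(m)k$. For $1\le f\le h$ let $b_f=\bar a_j$ if $f=\rho(m)j$ with $1\le j\le k$, and $b_f=0$ otherwise. Define $(y(n))_{n\ge0}$ by $y(\rho(m)j+i)=x^{\alpha_i}(1+j)$ for $0\le j\le k-1$, $0\le i\le\rho(m)-1$, and $y(n)=\mathbf 1\big[\sum_{f=1}^h b_f y(n-f)-\bar\theta\big]$ for $n\ge h$. Let $L_1(d)=\rho(m)\cdot\mathrm{lcm}(p_0,\dots,p_d)$ for $0\le d\le\rho(m)-1$; let $L_0(d)=\rho(m)\cdot\mathrm{lcm}(p_{d+1},\dots,p_{\rho(m)-1})$ if $0\le d\le\rho(m)-2$ and $L_0(\rho(m)-1)=1$. For $0\le d\le\rho(m)-1$ define $(w(n,d))_{n\ge0}$ by: for $0\le i\le d$, $w(\rho(m)j+i,d)=x^{\alpha_i}(1+j)$ for $0\le j\le k-2$ and $w(\rho(m)(k-1)+i,d)=1-x^{\alpha_i}(k)$; for $d+1\le i\le\rho(m)-1$ and $0\le j\le k-1$,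 $w(\rho(m)j+i,d)=y(\rho(m)j+i+L_1(d))$; and $w(n,d)=\mathbf 1\big[\sum_{f=1}^h b_f w(n-f,d)-\bar\theta\big]$ for $n\ge h$. *)

theory Defs
  imports "HOL-Computational_Algebra.Primes"
begin

definition one :: "int \<Rightarrow> int" where
  "one u = (if u \<ge> 0 then 1 else 0)"

function thr_seq :: "nat \<Rightarrow> (nat \<Rightarrow> int) \<Rightarrow> (nat \<Rightarrow> int) \<Rightarrow> int \<Rightarrow> nat \<Rightarrow> int" where
  "thr_seq h init a theta n =
     (if n < h then init n
      else one ((\<Sum>f=1..h. a f * thr_seq h init a theta (n - f)) - theta))"
  by pat_completeness auto
termination
  by (relation "measure (\<lambda>(h, init, a, theta, n). n)") auto

definition is_period :: "(nat \<Rightarrow> 'a) \<Rightarrow> nat \<Rightarrow> nat \<Rightarrow> bool" where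
  "is_period s T P \<longleftrightarrow> P \<ge> 1 \<and> (\<forall>n\<ge>T. s (n + P) = s n)"

definition eventually_periodic :: "(nat \<Rightarrow> 'a) \<Rightarrow> bool" where
  "eventually_periodic s \<longleftrightarrow> (\<exists>T P. is_period s T P)"

definition transient_length :: "(nat \<Rightarrow> 'a) \<Rightarrow> nat" where
  "transient_length s = (LEAST T. \<exists>P. is_period s T P)"

definition cycle_length :: "(nat \<Rightarrow> 'a) \<Rightarrow> nat" where
  "cycle_length s = (LEAST P. is_period s (transient_length s) P)"

definition primes_between :: "nat \<Rightarrow> nat set" where
  "primes_between m = {p. prime p \<and> 2 * m < p \<and> p < 3 * m}"

definition rho :: "nat \<Rightarrow> nat" where
  "rho m = card (primes_between m)"

definition pr :: "nat \<Rightarrow> nat \<Rightarrow> nat" where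
  "pr m i = rev (sorted_list_of_set (primes_between m)) ! i"

definition kk :: "nat \<Rightarrow> nat" where
  "kk m = (6 * m - 1) * rho m"

definition mu :: "nat \<Rightarrow> nat \<Rightarrow> nat" where
  "mu m i = kk m div pr m i"

definition beta :: "nat \<Rightarrow> nat \<Rightarrow> nat" where
  "beta m i = kk m - pr m i * mu m i"

definition abar :: "nat \<Rightarrow> nat \<Rightarrow> int" where
  "abar m j =
    (if even (rho m) then
       (if \<exists>i<rho m. \<exists>l. 1 \<le> l \<and> 2 * l \<le> 3 * rho m \<and> j = l * pr m i then 2
        else if \<exists>i<rho m. \<exists>l. 3 * rho m < 2 * l \<and> l \<le> 2 * rho m \<and> j = l * pr m i then -2
        else 0)
     else
       (if \<exists>i<rho m. \<exists>l. 1 \<le> l \<and> 2 * l \<le> 3 * rho m - 1 \<and> j = l * pr m i then 2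
        else if \<exists>i<rho m. \<exists>l. 3 * rho m + 1 \<le> 2 * l \<and> l \<le> 2 * rho m - 2 \<and> j = l * pr m i then -2
        else if \<exists>i<rho m. \<exists>l. (l = 2 * rho m - 1 \<or> l = 2 * rho m) \<and> j = l * pr m i then -1
        else 0))"

definition theta_bar :: "nat \<Rightarrow> int" where
  "theta_bar m = 2 * int (rho m)"

definition xa :: "nat \<Rightarrow> nat \<Rightarrow> nat \<Rightarrow> int" where
  "xa m i = thr_seq (kk m)
      (\<lambda>t. if \<exists>l<mu m i. t = beta m i + l * pr m i then 1 else 0)
      (abar m) (theta_bar m)"

definition hh :: "nat \<Rightarrow> nat" where
  "hh m = rho m * kk m"

definition bw :: "nat \<Rightarrow> nat \<Rightarrow> int" where
  "bw m f = (if \<exists>j. 1 \<le> j \<and> j \<le> kk m \<and> f = rho m * j then abar m (f div rho m) else 0)"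

definition y :: "nat \<Rightarrow> nat \<Rightarrow> int" where
  "y m = thr_seq (hh m)
      (\<lambda>n. xa m (n mod rho m) (1 + n div rho m))
      (bw m) (theta_bar m)"

definition L1 :: "nat \<Rightarrow> nat \<Rightarrow> nat" where
  "L1 m d = rho m * Lcm (pr m ` {0..d})"

definition L0 :: "nat \<Rightarrow> nat \<Rightarrow> nat" where
  "L0 m d = (if d + 2 \<le> rho m then rho m * Lcm (pr m ` {d+1..rho m - 1}) else 1)"

definition w :: "nat \<Rightarrow> nat \<Rightarrow> nat \<Rightarrow> int" where
  "w m d = thr_seq (hh m)
      (\<lambda>n. let i = n mod rho m; j = n div rho m in
         if i \<le> d then
           (if j + 2 \<le> kk m then xa m i (1 + j) else 1 - xa m i (kk m))
         else y m (n + L1 m d))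
      (bw m) (theta_bar m)"

end

theory Submission
  imports Defs "HOL-Number_Theory.Cong"
begin

text \<open>
  The weights \<open>abar\<close> live on the small multiples \<open>l p\<^sub>i\<close>
  (\<open>1 \<le> l \<le> 2\<rho>\<close>) of the primes \<open>p\<^sub>i\<close>, and as a function of \<open>l\<close> they follow one fixed
  profile whose total is exactly the threshold \<open>2\<rho>\<close> while every proper tail of it is smaller.
  Since a small multiple of one prime is never a multiple of another, a residue class
  mod \<open>p\<^sub>i\<close> other than the class of \<open>0\<close> meets at most one non-zero weight per other prime and stays
  below the threshold.  Consequently the indicator of a residue class mod \<open>p\<^sub>i\<close> is a fixed
  point of the order-\<open>k\<close> threshold recurrence, whereas the same indicator cut off at time
  \<open>k - 1\<close> dies out.

  Then come the primes, the weights and the two step lemmas above, which give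
  closed forms: \<open>x\<^sup>\<alpha>\<^sup>i\<close> and \<open>y\<close> are class patterns, and track \<open>i\<close> of \<open>w(\<cdot>, d)\<close> is a dying
  pattern for \<open>i \<le> d\<close> and a shifted class pattern for \<open>i > d\<close>.  From these the transient
  (the last one of the dying tracks) and the cycle (a multiple of \<open>\<rho>\<close> and of every \<open>p\<^sub>i\<close>,
  \<open>i > d\<close>) are read off, which is the theorem.
\<close>

section \<open>Arithmetic facts\<close>

lemma mod_add_self_iff: "((u::nat) + j) mod p = u mod p \<longleftrightarrow> p dvd j"
  using mod_eq_dvd_iff_nat[of u "u + j" p] by simp

lemma mod_sub_iff:
  assumes "j \<le> t"
  shows "(t - j + a) mod p = (t + a) mod p \<longleftrightarrow> p dvd (j::nat)"
  using mod_eq_dvd_iff_nat[of "t - j + a" "t + a" p] assms by (auto simp: eq_commute)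

lemma reachable_residue:
  fixes Q r n c :: nat
  assumes "0 < r" "[n = c] (mod gcd Q r)"
  shows "\<exists>x. [n + Q * x = c] (mod r)"
proof -
  define d where "d = c + (r - 1) * n"
  have "[d = n + (r - 1) * n] (mod gcd Q r)"
    unfolding d_def using assms(2) by (simp add: cong_sym cong_add)
  also have "n + (r - 1) * n = r * n" using assms(1) by (cases r) auto
  also have "[r * n = 0] (mod gcd Q r)" by (simp add: cong_0_iff)
  finally have "gcd Q r dvd d" by (simp add: cong_0_iff)
  then obtain x where x: "[Q * x = d] (mod r)" using cong_solve_dvd_nat by blast
  have "[n + Q * x = n + d] (mod r)" using x by (simp add: cong_add)
  also have "n + d = c + r * n" unfolding d_def using assms(1) by (cases r) auto
  also have "[c + r * n = c] (mod r)" by (simp add: cong_def)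
  finally show ?thesis by blast
qed

lemma classes_across_threshold:
  fixes g r d :: nat
  assumes "0 < g" "g dvd r" "g < r" "d + 2 \<le> r"
  obtains c c' where "d < c" "c < r" "c' \<le> d" "[c = c'] (mod g)"
proof (cases "d + g < r")
  case True
  show ?thesis by (rule that[of "d + g" d]) (use True assms(1) in \<open>auto simp: cong_def\<close>)
next
  case False
  obtain q where q: "r = g * q" using assms(2) by blast
  then have "q \<ge> 2" using assms(1,3) by (cases q) auto
  then have "2 * g \<le> r" using q by simp
  have "(r - 1) mod g < g" using assms(1) by simp
  then have "(r - 1) mod g \<le> d" using False \<open>2 * g \<le> r\<close> by linarith
  then show ?thesis
    by (intro that[of "r - 1" "(r - 1) mod g"]) (use assms(4) in \<open>auto simp: cong_def\<close>)
qed

section \<open>Periods and threshold recurrences\<close>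

lemma is_period_iterate:
  assumes "is_period s T P" "T \<le> n"
  shows "s (n + P * q) = s n"
proof (induction q)
  case (Suc q)
  have "s (n + P * q + P) = s (n + P * q)" using assms unfolding is_period_def by auto
  moreover have "n + P * Suc q = n + P * q + P" by simp
  ultimately show ?case using Suc by (simp only:)
qed simp

lemma thr_seq_eqI:
  assumes "\<And>n. n < h \<Longrightarrow> init n = Z n"
    and "\<And>n. h \<le> n \<Longrightarrow> one ((\<Sum>f=1..h. a f * Z (n - f)) - th) = Z n"
  shows "thr_seq h init a th n = Z n"
proof (induction n rule: less_induct)
  case (less n)
  show ?case
  proof (cases "n < h")
    case False
    have "(\<Sum>f=1..h. a f * thr_seq h init a th (n - f)) = (\<Sum>f=1..h. a f * Z (n - f))"
      by (rule sum.cong[OF refl]) (use False less.IH in auto)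
    then show ?thesis using False assms(2) by (subst thr_seq.simps) simp
  qed (use assms(1) in \<open>subst thr_seq.simps, simp\<close>)
qed

lemma sum_spread:
  fixes r k :: nat and a b :: "nat \<Rightarrow> int"
  assumes "0 < r"
    and b: "\<And>f. 1 \<le> f \<Longrightarrow> f \<le> r * k \<Longrightarrow> b f = (if r dvd f then a (f div r) else 0)"
  shows "(\<Sum>f=1..r * k. b f * F f) = (\<Sum>j=1..k. a j * F (r * j))"
proof -
  have inj: "inj_on ((*) r) {1..k}" using assms(1) by (intro inj_onI) simp
  have "(\<Sum>j=1..k. a j * F (r * j)) = (\<Sum>j=1..k. b (r * j) * F (r * j))"
    by (rule sum.cong) (use assms in auto)
  also have "\<dots> = (\<Sum>f\<in>(*) r ` {1..k}. b f * F f)"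
    by (rule sum.reindex[OF inj, unfolded comp_def, symmetric])
  also have "\<dots> = (\<Sum>f=1..r * k. b f * F f)"
    by (rule sum.mono_neutral_left) (use assms in \<open>auto simp: dvd_def\<close>)
  finally show ?thesis by simp
qed

text \<open>Interleaving: with such weights, the recurrence of order \<open>r k\<close> runs \<open>r\<close> independent
  recurrences of order \<open>k\<close> on the residue classes of the index mod \<open>r\<close> (the tracks).\<close>
lemma thr_seq_interleave:
  fixes r k :: nat and Z :: "nat \<Rightarrow> nat \<Rightarrow> int"
  assumes "0 < r"
    and b: "\<And>f. 1 \<le> f \<Longrightarrow> f \<le> r * k \<Longrightarrow> b f = (if r dvd f then a (f div r) else 0)"
    and rec: "\<And>i t. i < r \<Longrightarrow> k \<le> t \<Longrightarrow> one ((\<Sum>j=1..k. a j * Z i (t - j)) - th) = Z i t"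
    and init: "\<And>n. n < r * k \<Longrightarrow> init n = Z (n mod r) (n div r)"
  shows "thr_seq (r * k) init b th n = Z (n mod r) (n div r)"
proof (rule thr_seq_eqI)
  fix n assume n: "r * k \<le> n"
  define i J where "i = n mod r" and "J = n div r"
  have ir: "i < r" and nJ: "n = r * J + i" using assms(1) by (simp_all add: i_def J_def)
  have kJ: "k \<le> J" using n assms(1) unfolding J_def
    by (simp add: less_eq_div_iff_mult_less_eq mult.commute)
  have shift: "n - r * j = r * (J - j) + i" if "j \<le> k" for j
    using nJ that kJ by (simp add: diff_mult_distrib2)
  have "(\<Sum>f=1..r * k. b f * Z ((n - f) mod r) ((n - f) div r))
      = (\<Sum>j=1..k. a j * Z ((n - r * j) mod r) ((n - r * j) div r))"
    by (rule sum_spread[OF assms(1) b])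
  also have "\<dots> = (\<Sum>j=1..k. a j * Z i (J - j))"
    by (rule sum.cong[OF refl]) (use shift ir in simp)
  finally show "one ((\<Sum>f=1..r * k. b f * Z ((n - f) mod r) ((n - f) div r)) - th)
      = Z (n mod r) (n div r)"
    using rec[OF ir kJ] by (simp add: i_def J_def)
qed (rule init)

section \<open>The primes between 2m and 3m\<close>

lemma finite_primes_between: "finite (primes_between m)"
  unfolding primes_between_def by (rule finite_subset[of _ "{..<3*m}"]) auto

text \<open>All primes in \<open>(2m, 3m)\<close> are odd, so there are at most \<open>m/2\<close> of them.\<close>
lemma two_rho_le: "2 * rho m \<le> m"
proof -
  have "primes_between m \<subseteq> (\<lambda>a. 2*m + 1 + 2*a) ` {..<m div 2}"
  proof
    fix p assume "p \<in> primes_between m"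
    then have p: "prime p" "2*m < p" "p < 3*m" by (auto simp: primes_between_def)
    then have "odd p" using prime_odd_nat[of p] by linarith
    then have "p = 2*m + 1 + 2*((p - 2*m - 1) div 2)" "(p - 2*m - 1) div 2 < m div 2"
      using p(2,3) by (auto elim!: oddE)
    then show "p \<in> (\<lambda>a. 2*m + 1 + 2*a) ` {..<m div 2}" by blast
  qed
  then have "rho m \<le> card ((\<lambda>a. 2*m + 1 + 2*a) ` {..<m div 2})"
    unfolding rho_def by (rule card_mono[rotated]) auto
  also have "\<dots> \<le> m div 2" using card_image_le[of "{..<m div 2}"] by auto
  finally show ?thesis by linarith
qed

lemma pr_mem:
  assumes "i < rho m"
  shows "pr m i \<in> primes_between m"
proof -
  have "length (rev (sorted_list_of_set (primes_between m))) = rho m"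
    by (simp add: rho_def)
  then show ?thesis unfolding pr_def using assms
    by (metis finite_primes_between nth_mem set_rev set_sorted_list_of_set)
qed

lemma pr_prime: "i < rho m \<Longrightarrow> prime (pr m i)"
  and pr_gt: "i < rho m \<Longrightarrow> 2*m < pr m i"
  and pr_lt: "i < rho m \<Longrightarrow> pr m i < 3*m"
  using pr_mem[of i m] by (auto simp: primes_between_def)

lemma pr_pos: "i < rho m \<Longrightarrow> 0 < pr m i"
  using pr_prime prime_gt_0_nat by blast

lemma pr_decreasing:
  assumes "i < j" "j < rho m"
  shows "pr m j < pr m i"
proof -
  let ?xs = "sorted_list_of_set (primes_between m)"
  have sorted: "sorted_wrt (<) ?xs" by (simp add: strict_sorted_list_of_set)
  have l: "length ?xs = rho m" by (simp add: rho_def)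
  have "?xs ! (rho m - 1 - j) < ?xs ! (rho m - 1 - i)"
    using sorted_wrt_nth_less[OF sorted, of "rho m - 1 - j" "rho m - 1 - i"] assms l by auto
  then show ?thesis unfolding pr_def using assms l by (simp add: rev_nth)
qed

lemma pr_antimono: "i \<le> j \<Longrightarrow> j < rho m \<Longrightarrow> pr m j \<le> pr m i"
  using pr_decreasing by (metis le_less)

lemma pr_inj: "i < rho m \<Longrightarrow> j < rho m \<Longrightarrow> pr m i = pr m j \<Longrightarrow> i = j"
  using pr_decreasing by (metis less_irrefl nat_neq_iff)

text \<open>The window length \<open>k\<close> contains the first \<open>2\<rho>\<close> multiples of every \<open>p\<^sub>i\<close>, with room to spare.\<close>
lemma kk_large:
  assumes "i < rho m"
  shows "2 * rho m * pr m i + rho m \<le> kk m"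
proof -
  have "2 * pr m i + 1 \<le> 6*m - 1" using pr_lt[OF assms] by linarith
  then have "rho m * (2 * pr m i + 1) \<le> rho m * (6*m - 1)" by (rule mult_left_mono) simp
  then show ?thesis unfolding kk_def by (simp add: algebra_simps)
qed

lemma prime_multiples_distinct:
  fixes p q l l' :: nat
  assumes "prime p" "prime q" "p \<noteq> q" "0 < l'" "l' < p" "l * p = l' * q"
  shows False
proof -
  have "p dvd l' * q" using assms(6) by (metis dvd_triv_right)
  then have "p dvd l'" using assms(1-3) by (metis prime_dvd_mult_iff primes_dvd_imp_eq)
  then show False using assms(4,5) by (simp add: dvd_imp_le leD)
qed

lemma multiple_repr_unique:
  assumes "i < rho m" "i' < rho m" "1 \<le> l'" "l' \<le> 2 * rho m" "l * pr m i = l' * pr m i'"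
  shows "i = i' \<and> l = l'"
proof (cases "i = i'")
  case True
  then show ?thesis using assms pr_pos[of i m] by simp
next
  case False
  have "l' < pr m i" using pr_gt[OF assms(1)] two_rho_le[of m] assms(4) by linarith
  then show ?thesis
    using prime_multiples_distinct[OF pr_prime[OF assms(1)] pr_prime[OF assms(2)] _ _ _ assms(5)]
      pr_inj[OF assms(1,2)] False assms(3) by auto
qed

section \<open>The weights\<close>

text \<open>The weight \<open>abar (l * p\<^sub>i)\<close> as a function of the multiplier \<open>l\<close>, for \<open>1 \<le> l \<le> 2\<rho>\<close>.\<close>
definition weight_profile :: "nat \<Rightarrow> nat \<Rightarrow> int" where
  "weight_profile r l = (if even r then (if 2*l \<le> 3*r then 2 else -2)
     else (if 2*l \<le> 3*r - 1 then 2 else if l \<le> 2*r - 2 then -2 else -1))"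

lemma abar_le_two: "abar m j \<le> 2"
  unfolding abar_def by auto

lemma abar_nonzero_multiple:
  assumes "abar m j \<noteq> 0"
  shows "\<exists>i<rho m. \<exists>l. 1 \<le> l \<and> l \<le> 2 * rho m \<and> j = l * pr m i"
proof (rule ccontr)
  let ?r = "rho m"
  assume "\<not> ?thesis"
  then have no_small: "\<forall>i<?r. \<forall>l. 1 \<le> l \<longrightarrow> l \<le> 2 * ?r \<longrightarrow> j \<noteq> l * pr m i" by blast
  have excluded: "\<not> (\<exists>i<?r. \<exists>l. C l \<and> j = l * pr m i)"
    if "\<And>i l. i < ?r \<Longrightarrow> C l \<Longrightarrow> 1 \<le> l \<and> l \<le> 2 * ?r" for C
    using no_small that by blast
  have "\<not> (\<exists>i<?r. \<exists>l. 1 \<le> l \<and> 2 * l \<le> 3 * ?r \<and> j = l * pr m i)"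
    by (rule excluded[of "\<lambda>l. 1 \<le> l \<and> 2 * l \<le> 3 * ?r", unfolded conj_assoc]) auto
  moreover have "\<not> (\<exists>i<?r. \<exists>l. 3 * ?r < 2 * l \<and> l \<le> 2 * ?r \<and> j = l * pr m i)"
    by (rule excluded[of "\<lambda>l. 3 * ?r < 2 * l \<and> l \<le> 2 * ?r", unfolded conj_assoc]) auto
  moreover have "\<not> (\<exists>i<?r. \<exists>l. 1 \<le> l \<and> 2 * l \<le> 3 * ?r - 1 \<and> j = l * pr m i)"
    by (rule excluded[of "\<lambda>l. 1 \<le> l \<and> 2 * l \<le> 3 * ?r - 1", unfolded conj_assoc]) auto
  moreover have "\<not> (\<exists>i<?r. \<exists>l. 3 * ?r + 1 \<le> 2 * l \<and> l \<le> 2 * ?r - 2 \<and> j = l * pr m i)"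
    by (rule excluded[of "\<lambda>l. 3 * ?r + 1 \<le> 2 * l \<and> l \<le> 2 * ?r - 2", unfolded conj_assoc]) auto
  moreover have "\<not> (\<exists>i<?r. \<exists>l. (l = 2 * ?r - 1 \<or> l = 2 * ?r) \<and> j = l * pr m i)"
    by (rule excluded[of "\<lambda>l. l = 2 * ?r - 1 \<or> l = 2 * ?r", unfolded conj_assoc]) auto
  ultimately have "abar m j = 0" unfolding abar_def by (simp only: if_False) simp
  then show False using assms by simp
qed

lemma abar_on_multiple:
  assumes "rho m \<ge> 2" "i < rho m" "1 \<le> l" "l \<le> 2 * rho m"
  shows "abar m (l * pr m i) = weight_profile (rho m) l"
proof -
  let ?r = "rho m"
  have repr: "(\<exists>i'<?r. \<exists>l'. C l' \<and> l * pr m i = l' * pr m i') \<longleftrightarrow> C l"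
    if "\<And>l'. C l' \<Longrightarrow> 1 \<le> l' \<and> l' \<le> 2 * ?r" for C
    using multiple_repr_unique[OF assms(2)] that assms(2) by metis
  have "(\<exists>i'<?r. \<exists>l'. 1 \<le> l' \<and> 2 * l' \<le> 3 * ?r \<and> l * pr m i = l' * pr m i')
      \<longleftrightarrow> 1 \<le> l \<and> 2 * l \<le> 3 * ?r"
    by (rule repr[of "\<lambda>l. 1 \<le> l \<and> 2 * l \<le> 3 * ?r", unfolded conj_assoc]) auto
  moreover have "(\<exists>i'<?r. \<exists>l'. 3 * ?r < 2 * l' \<and> l' \<le> 2 * ?r \<and> l * pr m i = l' * pr m i')
      \<longleftrightarrow> 3 * ?r < 2 * l \<and> l \<le> 2 * ?r"
    by (rule repr[of "\<lambda>l. 3 * ?r < 2 * l \<and> l \<le> 2 * ?r", unfolded conj_assoc]) auto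
  moreover have "(\<exists>i'<?r. \<exists>l'. 1 \<le> l' \<and> 2 * l' \<le> 3 * ?r - 1 \<and> l * pr m i = l' * pr m i')
      \<longleftrightarrow> 1 \<le> l \<and> 2 * l \<le> 3 * ?r - 1"
    by (rule repr[of "\<lambda>l. 1 \<le> l \<and> 2 * l \<le> 3 * ?r - 1", unfolded conj_assoc]) auto
  moreover have "(\<exists>i'<?r. \<exists>l'. 3 * ?r + 1 \<le> 2 * l' \<and> l' \<le> 2 * ?r - 2 \<and> l * pr m i = l' * pr m i')
      \<longleftrightarrow> 3 * ?r + 1 \<le> 2 * l \<and> l \<le> 2 * ?r - 2"
    by (rule repr[of "\<lambda>l. 3 * ?r + 1 \<le> 2 * l \<and> l \<le> 2 * ?r - 2", unfolded conj_assoc]) auto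
  moreover have "(\<exists>i'<?r. \<exists>l'. (l' = 2 * ?r - 1 \<or> l' = 2 * ?r) \<and> l * pr m i = l' * pr m i')
      \<longleftrightarrow> l = 2 * ?r - 1 \<or> l = 2 * ?r"
    by (rule repr) (use assms(1) in auto)
  ultimately have abar_l: "abar m (l * pr m i) = (if even ?r
      then (if 2 * l \<le> 3 * ?r then 2 else if 3 * ?r < 2 * l then -2 else 0)
      else (if 2 * l \<le> 3 * ?r - 1 then 2 else if 3 * ?r + 1 \<le> 2 * l \<and> l \<le> 2 * ?r - 2 then -2
        else if l = 2 * ?r - 1 \<or> l = 2 * ?r then -1 else 0))"
    using assms(3,4) unfolding abar_def by (simp only:) simp
  show ?thesis
  proof (cases "even ?r")
    case False
    then have "2 * l \<noteq> 3 * ?r" by presburger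
    then show ?thesis using False assms(4) unfolding abar_l weight_profile_def by auto
  qed (simp add: abar_l weight_profile_def)
qed

lemma abar_beyond_multiple:
  assumes "i < rho m" "2 * rho m < l"
  shows "abar m (l * pr m i) = 0"
proof (rule ccontr)
  assume "abar m (l * pr m i) \<noteq> 0"
  then obtain i' l' where "i' < rho m" "1 \<le> l'" "l' \<le> 2 * rho m" "l * pr m i = l' * pr m i'"
    using abar_nonzero_multiple by blast
  then show False using multiple_repr_unique[OF assms(1)] assms(2) by fastforce
qed

definition profile_psum :: "nat \<Rightarrow> nat \<Rightarrow> int" where
  "profile_psum r s = (if even r then (if 2*s \<le> 3*r then 2 * int s else 6 * int r - 2 * int s)
     else (if 2*s \<le> 3*r - 1 then 2 * int s else if s \<le> 2*r - 2 then 6 * int r - 2 - 2 * int s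
       else if s = 2*r - 1 then 2 * int r + 1 else 2 * int r))"

lemma profile_psum_eq:
  assumes "r \<ge> 2" "s \<le> 2*r"
  shows "(\<Sum>l=1..s. weight_profile r l) = profile_psum r s"
  using assms(2)
proof (induction s)
  case 0
  then show ?case by (simp add: profile_psum_def)
next
  case (Suc s)
  have "(\<Sum>l=1..Suc s. weight_profile r l) = profile_psum r s + weight_profile r (Suc s)"
    using Suc by simp
  also have "\<dots> = profile_psum r (Suc s)"
  proof (cases "even r")
    case True
    then obtain q where "r = 2*q" by blast
    then show ?thesis using True Suc.prems assms(1) unfolding profile_psum_def weight_profile_def by auto
  next
    case False
    then obtain q where "r = 2*q + 1" using oddE by blast
    then show ?thesis using False Suc.prems assms(1) unfolding profile_psum_def weight_profile_def by auto
  qed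
  finally show ?case .
qed

text \<open>The full profile sums exactly to the threshold \<open>2\<rho>\<close> ...\<close>
lemma profile_total: "r \<ge> 2 \<Longrightarrow> (\<Sum>l=1..2*r. weight_profile r l) = 2 * int r"
  by (subst profile_psum_eq) (auto simp: profile_psum_def)

text \<open>... while every proper tail stays below it, since all non-empty initial sums are positive.\<close>
lemma profile_tail_below:
  assumes "r \<ge> 2" "1 \<le> s"
  shows "(\<Sum>l=s+1..2*r. weight_profile r l) < 2 * int r"
proof (cases "s \<le> 2*r")
  case True
  have "{1..2*r} = {1..s} \<union> {s+1..2*r}" using True by auto
  then have "(\<Sum>l=1..2*r. weight_profile r l) = (\<Sum>l=1..s. weight_profile r l) + (\<Sum>l=s+1..2*r. weight_profile r l)"
    by (simp add: sum.union_disjoint[symmetric] ivl_disj_int)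
  moreover have "(\<Sum>l=1..s. weight_profile r l) \<ge> 1"
    using assms True by (subst profile_psum_eq) (auto simp: profile_psum_def)
  ultimately show ?thesis using profile_total[OF assms(1)] by linarith
qed (use assms in simp)

lemma sum_multiples_in_window:
  assumes "rho m \<ge> 2" "i < rho m"
  shows "(\<Sum>j\<in>{j\<in>{1..kk m}. pr m i dvd j \<and> s * pr m i < j}. abar m j)
    = (\<Sum>l=s+1..2 * rho m. weight_profile (rho m) l)"
proof -
  let ?p = "pr m i" and ?K = "kk m div pr m i"
  have p0: "0 < ?p" using pr_pos[OF assms(2)] .
  have "2 * rho m * ?p \<le> kk m" using kk_large[OF assms(2)] by linarith
  then have K: "2 * rho m \<le> ?K" using p0 by (simp add: less_eq_div_iff_mult_less_eq)
  have multiples: "{j\<in>{1..kk m}. ?p dvd j \<and> s * ?p < j} = (\<lambda>l. l * ?p) ` {s+1..?K}"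
  proof (intro set_eqI iffI)
    fix j assume j: "j \<in> {j\<in>{1..kk m}. ?p dvd j \<and> s * ?p < j}"
    then obtain l where l: "j = l * ?p" by (auto elim: dvdE simp: mult.commute)
    then have "s < l" "l \<le> ?K" using j p0 by (auto simp: less_eq_div_iff_mult_less_eq)
    then show "j \<in> (\<lambda>l. l * ?p) ` {s+1..?K}" using l by auto
  next
    fix j assume "j \<in> (\<lambda>l. l * ?p) ` {s+1..?K}"
    then obtain l where l: "j = l * ?p" "s + 1 \<le> l" "l \<le> ?K" by (force simp del: mult_cancel_right)
    then have "l * ?p \<le> kk m" "s * ?p < l * ?p" "1 \<le> l * ?p"
      using p0 by (simp_all add: less_eq_div_iff_mult_less_eq)
    then show "j \<in> {j\<in>{1..kk m}. ?p dvd j \<and> s * ?p < j}" using l(1) by auto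
  qed
  have inj: "inj_on (\<lambda>l. l * ?p) {s+1..?K}" using p0 by (auto simp: inj_on_def)
  have "(\<Sum>j\<in>{j\<in>{1..kk m}. ?p dvd j \<and> s * ?p < j}. abar m j) = (\<Sum>l=s+1..?K. abar m (l * ?p))"
    unfolding multiples by (rule sum.reindex[OF inj, unfolded comp_def])
  also have "\<dots> = (\<Sum>l=s+1..?K. if l \<le> 2 * rho m then weight_profile (rho m) l else 0)"
    by (rule sum.cong) (auto simp: abar_on_multiple[OF assms] abar_beyond_multiple[OF assms(2)])
  also have "\<dots> = (\<Sum>l=s+1..2 * rho m. weight_profile (rho m) l)"
    using sum.mono_neutral_right[of "{s+1..?K}" "{s+1..2 * rho m}"
        "\<lambda>l. if l \<le> 2 * rho m then weight_profile (rho m) l else 0"] K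
    by simp
  finally show ?thesis .
qed

lemma multiples_incongruent:
  assumes "i < rho m" "i' < rho m" "i' \<noteq> i" "l2 \<le> l1" "l1 \<le> 2 * rho m"
    "(l1 * pr m i') mod pr m i = (l2 * pr m i') mod pr m i"
  shows "l1 = l2"
proof -
  let ?p = "pr m i" and ?q = "pr m i'"
  have "?p dvd (l1 - l2) * ?q"
    using mod_eq_dvd_iff_nat[of "l2 * ?q" "l1 * ?q" ?p] assms(4,6)
    by (simp add: mult_le_mono1 diff_mult_distrib)
  then have "?p dvd l1 - l2"
    using pr_prime[OF assms(1)] pr_prime[OF assms(2)] pr_inj[OF assms(1,2)] assms(3)
    by (metis prime_dvd_mult_iff primes_dvd_imp_eq)
  moreover have "l1 - l2 < ?p" using pr_gt[OF assms(1)] two_rho_le[of m] assms(5) by linarith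
  ultimately have "l1 - l2 = 0" using nat_dvd_not_less by blast
  then show ?thesis using assms(4) by simp
qed

text \<open>Inside one non-zero residue class mod \<open>p\<^sub>i\<close> each other prime \<open>p\<^sub>i\<^sub>'\<close> carries at most one
  non-zero weight, so there are at most \<open>\<rho> - 1\<close> of them.\<close>
lemma nonzero_weights_single_class:
  assumes "i < rho m"
    and same: "\<And>j1 j2. j1 \<in> S \<Longrightarrow> j2 \<in> S \<Longrightarrow> j1 mod pr m i = j2 mod pr m i"
    and nondiv: "\<And>j. j \<in> S \<Longrightarrow> \<not> pr m i dvd j"
  shows "card {j\<in>S. abar m j \<noteq> 0} \<le> rho m - 1"
proof -
  define N where "N = {j\<in>S. abar m j \<noteq> 0}"
  define f where "f j = (SOME i'. i' < rho m \<and> (\<exists>l. 1 \<le> l \<and> l \<le> 2 * rho m \<and> j = l * pr m i'))" for j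
  have f: "f j < rho m \<and> (\<exists>l. 1 \<le> l \<and> l \<le> 2 * rho m \<and> j = l * pr m (f j))" if "j \<in> N" for j
  proof -
    have "abar m j \<noteq> 0" using that N_def by simp
    then show ?thesis unfolding f_def by (rule someI_ex[OF abar_nonzero_multiple])
  qed
  have f_other: "f j \<noteq> i" if j: "j \<in> N" for j
  proof
    assume "f j = i"
    then obtain l where "j = l * pr m i" using f[OF j] by auto
    then have "pr m i dvd j" by simp
    then show False using nondiv j N_def by blast
  qed
  have "inj_on f N"
  proof (rule inj_onI)
    fix j1 j2 assume j: "j1 \<in> N" "j2 \<in> N" "f j1 = f j2"
    from f[OF j(1)] obtain l1 where l1: "l1 \<le> 2 * rho m" "j1 = l1 * pr m (f j1)" by blast
    from f[OF j(2)] obtain l2 where l2: "l2 \<le> 2 * rho m" "j2 = l2 * pr m (f j1)"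
      unfolding j(3) by blast
    have "j1 \<in> S" "j2 \<in> S" using j(1,2) N_def by simp_all
    then have "(l1 * pr m (f j1)) mod pr m i = (l2 * pr m (f j1)) mod pr m i"
      unfolding l1(2)[symmetric] l2(2)[symmetric] by (rule same)
    moreover note incongruent =
      multiples_incongruent[OF assms(1) conjunct1[OF f[OF j(1)]] f_other[OF j(1)]]
    ultimately have "l1 = l2"
      using incongruent[of l2 l1] incongruent[of l1 l2] l1(1) l2(1) by (metis nat_le_linear)
    then show "j1 = j2" using l1(2) l2(2) by metis
  qed
  moreover have "f ` N \<subseteq> {..<rho m} - {i}"
    using conjunct1[OF f] f_other by blast
  ultimately show ?thesis
    using card_inj_on_le[of f N "{..<rho m} - {i}"] assms(1) unfolding N_def by simp
qed

lemma sum_single_class: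
  assumes "rho m \<ge> 2" "i < rho m" "finite S"
    and "\<And>j1 j2. j1 \<in> S \<Longrightarrow> j2 \<in> S \<Longrightarrow> j1 mod pr m i = j2 mod pr m i"
    and "\<And>j. j \<in> S \<Longrightarrow> \<not> pr m i dvd j"
  shows "(\<Sum>j\<in>S. abar m j) \<le> 2 * (int (rho m) - 1)"
proof -
  define N where "N = {j\<in>S. abar m j \<noteq> 0}"
  have "card N \<le> rho m - 1" unfolding N_def
    by (rule nonzero_weights_single_class) (use assms in auto)
  then have N_bound: "int (card N) \<le> int (rho m) - 1" using assms(1) by (simp add: of_nat_diff)
  have "(\<Sum>j\<in>S. abar m j) = (\<Sum>j\<in>N. abar m j)"
    unfolding N_def by (rule sum.mono_neutral_right) (use assms(3) in auto)
  also have "\<dots> \<le> (\<Sum>j\<in>N. 2)" by (rule sum_mono) (rule abar_le_two)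
  also have "\<dots> = 2 * int (card N)" by simp
  also have "\<dots> \<le> 2 * (int (rho m) - 1)" using N_bound by simp
  finally show ?thesis .
qed

lemma sum_off_class:
  assumes "rho m \<ge> 2" "i < rho m" "S \<subseteq> {1..kk m}"
    and S: "\<And>j. j \<in> S \<Longrightarrow> j \<le> t \<and> (t - j + a) mod pr m i = c"
    and off: "(t + a) mod pr m i \<noteq> c"
  shows "(\<Sum>j\<in>S. abar m j) \<le> 2 * (int (rho m) - 1)"
proof (rule sum_single_class[OF assms(1,2)])
  show "finite S" using assms(3) finite_subset by blast
  fix j1 j2 assume "j1 \<in> S" "j2 \<in> S"
  with S have j: "j1 \<le> t" "j2 \<le> t" "[t - j1 + a = t - j2 + a] (mod pr m i)"
    unfolding cong_def by blast+
  have "[(t - j1 + a) + j1 = (t - j2 + a) + j2] (mod pr m i)" using j(1,2) by simp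
  also have "[(t - j2 + a) + j2 = (t - j1 + a) + j2] (mod pr m i)"
    using j(3) by (simp add: cong_add_rcancel_nat cong_sym)
  finally have "[j1 = j2] (mod pr m i)" by (simp only: cong_add_lcancel_nat)
  then show "j1 mod pr m i = j2 mod pr m i" by (simp only: cong_def)
next
  fix j assume "j \<in> S"
  then show "\<not> pr m i dvd j" using S[OF \<open>j \<in> S\<close>] off mod_sub_iff[of j t a "pr m i"] by auto
qed

section \<open>Residue-class patterns under the recurrence\<close>

definition class_pattern :: "nat \<Rightarrow> nat \<Rightarrow> nat \<Rightarrow> nat \<Rightarrow> int" where
  "class_pattern p a c t = (if (t + a) mod p = c mod p then 1 else 0)"

definition dying_pattern :: "nat \<Rightarrow> nat \<Rightarrow> nat \<Rightarrow> int" where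
  "dying_pattern p k t = (if (t + 1) mod p = k mod p \<and> t + 1 < k then 1 else 0)"

lemma class_pattern_shift: "p dvd q \<Longrightarrow> class_pattern p a c (t + q) = class_pattern p a c t"
  using mod_add_self_iff[of "t + a" q p] unfolding class_pattern_def by (simp add: ac_simps)

lemma class_pattern_shift_dvd:
  assumes "class_pattern p a c t = 1" "class_pattern p a c (t + q) = 1"
  shows "p dvd q"
  using assms mod_add_self_iff[of "t + a" q p] unfolding class_pattern_def
  by (simp add: ac_simps split: if_splits)

lemma sum_indicator:
  "(\<Sum>j=1..(k::nat). f j * (if Q j then 1 else (0::int))) = (\<Sum>j\<in>{j\<in>{1..k}. Q j}. f j)"
  by (subst sum.inter_filter) (auto intro: sum.cong)

text \<open>A residue-class pattern mod \<open>p\<^sub>i\<close> reproduces itself: on the class the window sees all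
  \<open>2\<rho>\<close> multiples of \<open>p\<^sub>i\<close> and reaches the threshold exactly; off the class it stays below.\<close>
lemma class_pattern_step:
  assumes "rho m \<ge> 2" "i < rho m" "kk m \<le> t"
  shows "one ((\<Sum>j=1..kk m. abar m j * class_pattern (pr m i) a c (t - j)) - theta_bar m)
    = class_pattern (pr m i) a c t"
proof -
  let ?p = "pr m i"
  define S where "S = {j\<in>{1..kk m}. (t - j + a) mod ?p = c mod ?p}"
  have sum_S: "(\<Sum>j=1..kk m. abar m j * class_pattern ?p a c (t - j)) = (\<Sum>j\<in>S. abar m j)"
    unfolding class_pattern_def S_def by (rule sum_indicator)
  show ?thesis
  proof (cases "(t + a) mod ?p = c mod ?p")
    case True
    have "S = {j\<in>{1..kk m}. ?p dvd j \<and> 0 * ?p < j}"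
      unfolding S_def using mod_sub_iff[of _ t a ?p] True assms(3) by auto
    then have "(\<Sum>j\<in>S. abar m j) = theta_bar m"
      using sum_multiples_in_window[OF assms(1,2), of 0] profile_total[OF assms(1)]
      by (simp add: theta_bar_def)
    then show ?thesis using True sum_S by (simp add: one_def class_pattern_def)
  next
    case False
    have "(\<Sum>j\<in>S. abar m j) \<le> 2 * (int (rho m) - 1)"
      by (rule sum_off_class[OF assms(1,2), of _ t a "c mod ?p"]) (use False assms(3) in \<open>auto simp: S_def\<close>)
    then show ?thesis using False sum_S by (simp add: one_def theta_bar_def class_pattern_def)
  qed
qed

text \<open>Once the cut-off has passed, a dying pattern stays zero: on its class the window now
  misses the first multiples of \<open>p\<^sub>i\<close>, whose weights are the positive ones.\<close>
lemma dying_pattern_step: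
  assumes "rho m \<ge> 2" "i < rho m" "kk m \<le> t"
  shows "one ((\<Sum>j=1..kk m. abar m j * dying_pattern (pr m i) (kk m) (t - j)) - theta_bar m)
    = dying_pattern (pr m i) (kk m) t"
proof -
  let ?p = "pr m i" and ?k = "kk m"
  define S where "S = {j\<in>{1..?k}. (t - j + 1) mod ?p = ?k mod ?p \<and> t - j + 1 < ?k}"
  have sum_S: "(\<Sum>j=1..?k. abar m j * dying_pattern ?p ?k (t - j)) = (\<Sum>j\<in>S. abar m j)"
    unfolding dying_pattern_def S_def by (rule sum_indicator)
  have "(\<Sum>j\<in>S. abar m j) < theta_bar m"
  proof (cases "(t + 1) mod ?p = ?k mod ?p")
    case True
    have "?p dvd t + 1 - ?k" using mod_eq_dvd_iff_nat[of ?k "t + 1" ?p] True assms(3) by simp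
    then obtain s where s: "t + 1 - ?k = s * ?p" by (metis dvdE mult.commute)
    have "1 \<le> s" using s assms(3) by (cases s) auto
    have "S = {j\<in>{1..?k}. ?p dvd j \<and> s * ?p < j}"
      unfolding S_def using mod_sub_iff[of _ t 1 ?p] True assms(3) s by auto
    then show ?thesis using sum_multiples_in_window[OF assms(1,2), of s]
        profile_tail_below[OF assms(1) \<open>1 \<le> s\<close>] by (simp add: theta_bar_def)
  next
    case False
    have "(\<Sum>j\<in>S. abar m j) \<le> 2 * (int (rho m) - 1)"
      by (rule sum_off_class[OF assms(1,2), of _ t 1 "?k mod ?p"]) (use False assms(3) in \<open>auto simp: S_def\<close>)
    then show ?thesis by (simp add: theta_bar_def)
  qed
  then show ?thesis using sum_S assms(3) by (simp add: one_def dying_pattern_def)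
qed

section \<open>Closed forms of the sequences\<close>

text \<open>\<open>\<beta>\<^sub>i\<close> is the residue of \<open>k\<close> mod \<open>p\<^sub>i\<close>, so \<open>\<beta>\<^sub>i + \<ell> p\<^sub>i\<close> (\<open>\<ell> < \<mu>\<^sub>i\<close>) runs through the class
  of \<open>k\<close> below \<open>k\<close>.\<close>
lemma beta_mod: "beta m i = kk m mod pr m i"
  unfolding beta_def mu_def by (simp add: minus_mult_div_eq_mod)

text \<open>\<open>x\<^sup>\<alpha>\<^sup>i\<close> is the indicator of the class of \<open>k\<close> mod \<open>p\<^sub>i\<close>: its initial block is that indicator,
  which the recurrence then reproduces.\<close>
lemma xa_closed:
  assumes "rho m \<ge> 2" "i < rho m"
  shows "xa m i t = class_pattern (pr m i) 0 (kk m) t"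
  unfolding xa_def
proof (rule thr_seq_eqI)
  let ?p = "pr m i" and ?k = "kk m"
  fix n assume n: "n < ?k"
  have k_split: "beta m i + mu m i * ?p = ?k" unfolding beta_mod mu_def by (rule mod_div_mult_eq)
  have "(\<exists>l<mu m i. n = beta m i + l * ?p) \<longleftrightarrow> n mod ?p = ?k mod ?p"
  proof
    assume "n mod ?p = ?k mod ?p"
    then have n_eq: "n = beta m i + (n div ?p) * ?p" by (metis beta_mod mod_div_mult_eq)
    then have "n div ?p < mu m i" using n k_split
      by (metis add_less_cancel_left mult_less_cancel2)
    then show "\<exists>l<mu m i. n = beta m i + l * ?p" using n_eq by blast
  qed (auto simp: beta_mod)
  then show "(if \<exists>l<mu m i. n = beta m i + l * ?p then 1 else 0) = class_pattern ?p 0 ?k n"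
    by (simp add: class_pattern_def)
qed (use class_pattern_step[OF assms] in auto)

lemma bw_spread:
  assumes "0 < rho m" "1 \<le> f" "f \<le> rho m * kk m"
  shows "bw m f = (if rho m dvd f then abar m (f div rho m) else 0)"
  using assms unfolding bw_def by (auto simp: dvd_def less_eq_div_iff_mult_less_eq)

lemma y_closed:
  assumes "rho m \<ge> 2"
  shows "y m n = class_pattern (pr m (n mod rho m)) 1 (kk m) (n div rho m)"
  unfolding y_def hh_def
proof (rule thr_seq_interleave[where Z = "\<lambda>i. class_pattern (pr m i) 1 (kk m)"])
  show r0: "0 < rho m" using assms by simp
  show "bw m f = (if rho m dvd f then abar m (f div rho m) else 0)"
    if "1 \<le> f" "f \<le> rho m * kk m" for f using bw_spread[OF r0 that] .
  show "one ((\<Sum>j=1..kk m. abar m j * class_pattern (pr m i) 1 (kk m) (t - j)) - theta_bar m)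
      = class_pattern (pr m i) 1 (kk m) t" if "i < rho m" "kk m \<le> t" for i t
    using class_pattern_step[OF assms that] .
  show "xa m (n mod rho m) (1 + n div rho m) = class_pattern (pr m (n mod rho m)) 1 (kk m) (n div rho m)"
    for n using xa_closed[OF assms] r0 by (simp add: class_pattern_def add.commute)
qed

text \<open>The tracks of \<open>w(\<cdot>, d)\<close>: tracks \<open>i \<le> d\<close> carry a dying pattern (the last initial value
  of \<open>x\<^sup>\<alpha>\<^sup>i\<close> is flipped), the others a class pattern shifted by \<open>L\<^sub>1(d)/\<rho>\<close>.\<close>
definition w_pattern :: "nat \<Rightarrow> nat \<Rightarrow> nat \<Rightarrow> nat \<Rightarrow> int" where
  "w_pattern m d i = (if i \<le> d then dying_pattern (pr m i) (kk m)
     else class_pattern (pr m i) (1 + Lcm (pr m ` {0..d})) (kk m))"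

lemma w_closed:
  assumes "rho m \<ge> 2"
  shows "w m d n = w_pattern m d (n mod rho m) (n div rho m)"
  unfolding w_def hh_def
proof (rule thr_seq_interleave[where Z = "w_pattern m d"])
  let ?r = "rho m" and ?k = "kk m" and ?L = "Lcm (pr m ` {0..d})"
  show r0: "0 < ?r" using assms by simp
  show "bw m f = (if ?r dvd f then abar m (f div ?r) else 0)"
    if "1 \<le> f" "f \<le> ?r * ?k" for f using bw_spread[OF r0 that] .
  show "one ((\<Sum>j=1..?k. abar m j * w_pattern m d i (t - j)) - theta_bar m) = w_pattern m d i t"
    if "i < ?r" "?k \<le> t" for i t
    using class_pattern_step[OF assms that] dying_pattern_step[OF assms that]
    unfolding w_pattern_def by simp
  fix n assume n: "n < ?r * ?k"
  define i j where "i = n mod ?r" and "j = n div ?r"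
  have ir: "i < ?r" unfolding i_def using r0 by simp
  have jk: "j < ?k" unfolding j_def using n r0 by (simp add: div_less_iff_less_mult mult.commute)
  have "(if i \<le> d then (if j + 2 \<le> ?k then xa m i (1 + j) else 1 - xa m i ?k)
      else y m (n + L1 m d)) = w_pattern m d i j"
  proof (cases "i \<le> d")
    case True
    then show ?thesis using jk xa_closed[OF assms ir]
      by (auto simp: w_pattern_def dying_pattern_def class_pattern_def add.commute)
  next
    case False
    have "n + L1 m d = ?r * (j + ?L) + i" unfolding L1_def i_def j_def by (simp add: algebra_simps)
    then have "(n + L1 m d) mod ?r = i" "(n + L1 m d) div ?r = j + ?L" using ir by simp_all
    then show ?thesis using False y_closed[OF assms, of "n + L1 m d"]
      by (simp add: w_pattern_def class_pattern_def ac_simps)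
  qed
  then show "(let i = n mod ?r; j = n div ?r in
      if i \<le> d then (if j + 2 \<le> ?k then xa m i (1 + j) else 1 - xa m i ?k)
      else y m (n + L1 m d)) = w_pattern m d (n mod ?r) (n div ?r)"
    unfolding i_def j_def Let_def .
qed

section \<open>Transient and cycle of \<open>w(\<cdot>, d)\<close>\<close>

lemma w_upper_track:
  assumes "rho m \<ge> 2" "d < n mod rho m"
  shows "w m d n = class_pattern (pr m (n mod rho m)) (1 + Lcm (pr m ` {0..d})) (kk m) (n div rho m)"
  using w_closed[OF assms(1)] assms(2) by (simp add: w_pattern_def)

definition w_transient :: "nat \<Rightarrow> nat \<Rightarrow> nat" where
  "w_transient m d = rho m * (kk m - pr m d - 1) + d + 1"

lemma kk_gt_pr:
  assumes "rho m \<ge> 2" "i < rho m"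
  shows "pr m i + 2 \<le> kk m"
proof -
  have "2 * 2 * pr m i \<le> 2 * rho m * pr m i" using assms(1) by simp
  then show ?thesis using kk_large[OF assms(2)] pr_pos[OF assms(2)] by linarith
qed

text \<open>From \<open>w_transient\<close> on, i.e. from position \<open>k - p\<^sub>d\<close> in each track \<open>i \<le> d\<close>, the dying
  patterns have no ones left: a one at \<open>t \<ge> k - p\<^sub>d\<close> would need \<open>p\<^sub>i \<le> k - t - 1 < p\<^sub>d \<le> p\<^sub>i\<close>.\<close>
lemma w_late_zero:
  assumes "rho m \<ge> 2" "d < rho m" "w_transient m d \<le> n" "n mod rho m \<le> d"
  shows "w m d n = 0"
proof -
  let ?r = "rho m" and ?k = "kk m"
  define i j where "i = n mod ?r" and "j = n div ?r"
  have nij: "n = ?r * j + i" and id: "i \<le> d" using assms(4) by (simp_all add: i_def j_def)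
  then have "?r * (?k - pr m d - 1) < ?r * j" using assms(3) unfolding w_transient_def by linarith
  then have "?k - pr m d - 1 < j" by simp
  moreover have "pr m d \<le> pr m i" using pr_antimono[OF id assms(2)] .
  moreover have "pr m d + 2 \<le> ?k" using kk_gt_pr[OF assms(1,2)] .
  moreover have "pr m i \<le> ?k - (j + 1)" if "(j + 1) mod pr m i = ?k mod pr m i" "j + 1 < ?k"
    using that mod_eq_dvd_iff_nat[of "j + 1" ?k "pr m i"] by (simp add: dvd_imp_le)
  ultimately have "dying_pattern (pr m i) ?k j = 0" unfolding dying_pattern_def by fastforce
  then show ?thesis using w_closed[OF assms(1), of d n] id by (simp add: w_pattern_def i_def j_def)
qed

text \<open>... whereas the entry just before is one, so no earlier transient is possible.\<close>
lemma w_last_one: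
  assumes "rho m \<ge> 2" "d < rho m"
  shows "w m d (w_transient m d - 1) = 1"
proof -
  let ?r = "rho m" and ?k = "kk m" and ?p = "pr m d"
  have e: "w_transient m d - 1 = ?r * (?k - ?p - 1) + d" unfolding w_transient_def by simp
  have kp: "?p + 2 \<le> ?k" using kk_gt_pr[OF assms] .
  have "(?k - ?p - 1 + 1) mod ?p = ?k mod ?p"
    using kp le_mod_geq[of ?p ?k] by (simp add: Suc_diff_Suc)
  moreover have "?k - ?p - 1 + 1 < ?k" using kp pr_pos[OF assms(2)] by linarith
  ultimately show ?thesis using w_closed[OF assms(1), of d "w_transient m d - 1"] assms
    unfolding e by (simp add: w_pattern_def dying_pattern_def)
qed

lemma w_recurring_ones:
  assumes "rho m \<ge> 2" "d < i" "i < rho m"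
  obtains n where "N \<le> n" "n mod rho m = i" "w m d n = 1"
proof -
  let ?r = "rho m" and ?k = "kk m" and ?p = "pr m i" and ?L = "Lcm (pr m ` {0..d})"
  have p0: "0 < ?p" using pr_pos[OF assms(3)] .
  define j where "j = (?p - 1) * (1 + ?L) + ?k + ?p * N"
  define n where "n = ?r * j + i"
  have "(?p - 1) * (1 + ?L) + (1 + ?L) = ?p * (1 + ?L)" using p0 by (cases ?p) auto
  then have "j + (1 + ?L) = ?k + ?p * (1 + ?L + N)" unfolding j_def by (simp add: algebra_simps)
  then have "(j + (1 + ?L)) mod ?p = ?k mod ?p" by (metis mod_mult_self2)
  moreover have n_track: "n mod ?r = i" "n div ?r = j" unfolding n_def using assms by simp_all
  ultimately have "w m d n = 1" using w_closed[OF assms(1), of d n] assms(2)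
    by (simp add: w_pattern_def class_pattern_def)
  moreover have "N \<le> n"
  proof -
    have "N \<le> ?p * N" using p0 by simp
    also have "\<dots> \<le> j" unfolding j_def by simp
    also have "\<dots> \<le> ?r * j" using assms by simp
    finally show ?thesis unfolding n_def by simp
  qed
  ultimately show ?thesis using that n_track(1) by blast
qed

lemma Lcm_upper_pos:
  assumes "rho m \<ge> 2" "d + 2 \<le> rho m"
  shows "0 < Lcm (pr m ` {d+1..rho m - 1})"
proof -
  have "0 \<notin> pr m ` {d+1..rho m - 1}"
  proof
    assume "0 \<in> pr m ` {d+1..rho m - 1}"
    then obtain i where i: "i \<in> {d+1..rho m - 1}" "pr m i = 0" by (metis imageE)
    then have "i < rho m" using assms by auto
    then show False using pr_pos[of i m] i(2) by simp
  qed
  then show ?thesis by (metis Lcm_0_iff finite_atLeastAtMost finite_imageI not_gr_zero)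
qed

text \<open>\<open>L\<^sub>0(d)\<close> is a period from \<open>w_transient\<close> on: it is a multiple of \<open>\<rho>\<close> and of every \<open>p\<^sub>i\<close>, \<open>i > d\<close>.\<close>
lemma w_period:
  assumes "rho m \<ge> 2" "d < rho m"
  shows "is_period (w m d) (w_transient m d) (L0 m d)"
proof (cases "d + 2 \<le> rho m")
  case True
  let ?r = "rho m" and ?M = "Lcm (pr m ` {d+1..rho m - 1})" and ?L = "Lcm (pr m ` {0..d})"
  have L: "L0 m d = ?r * ?M" using True unfolding L0_def by simp
  show ?thesis unfolding is_period_def
  proof (intro conjI allI impI)
    show "1 \<le> L0 m d" using L Lcm_upper_pos[OF assms(1) True] assms by simp
    fix n assume n: "w_transient m d \<le> n"
    define i j where "i = n mod ?r" and "j = n div ?r"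
    have ir: "i < ?r" using assms i_def by simp
    have shifted: "(n + L0 m d) mod ?r = i" "(n + L0 m d) div ?r = ?M + j"
      unfolding L i_def j_def using ir by simp_all
    show "w m d (n + L0 m d) = w m d n"
    proof (cases "i \<le> d")
      case True
      then show ?thesis using w_late_zero[OF assms] n shifted(1) by (simp add: i_def)
    next
      case False
      have "pr m i dvd ?M" by (rule dvd_Lcm) (use False ir in auto)
      let ?pattern = "class_pattern (pr m i) (1 + ?L) (kk m)"
      have "w m d (n + L0 m d) = ?pattern (?M + j)"
        using w_upper_track[OF assms(1), of d "n + L0 m d"] False shifted by simp
      also have "\<dots> = ?pattern j"
        using class_pattern_shift[OF \<open>pr m i dvd ?M\<close>, of _ _ j] by (simp add: add.commute)
      also have "\<dots> = w m d n" using w_upper_track[OF assms(1), of d n] False by (simp add: i_def j_def)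
      finally show ?thesis .
    qed
  qed
next
  case False
  then have d: "d = rho m - 1" "L0 m d = 1" using assms unfolding L0_def by auto
  show ?thesis unfolding is_period_def
  proof (intro conjI allI impI)
    fix n assume n: "w_transient m d \<le> n"
    have "n mod rho m < rho m" "(n + 1) mod rho m < rho m" using assms by simp_all
    then have "n mod rho m \<le> d" "(n + 1) mod rho m \<le> d" using d(1) by linarith+
    then show "w m d (n + L0 m d) = w m d n" using w_late_zero[OF assms] n d(2) by simp
  qed (use d in simp)
qed

text \<open>The transient is exactly \<open>w_transient\<close>: a shorter one would repeat the one at
  \<open>w_transient - 1\<close> in the dead track \<open>d\<close>.\<close>
lemma transient_length_w:
  assumes "rho m \<ge> 2" "d < rho m"
  shows "transient_length (w m d) = w_transient m d"
  unfolding transient_length_def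
proof (rule Least_equality)
  show "\<exists>P. is_period (w m d) (w_transient m d) P" using w_period[OF assms] by blast
next
  fix T assume "\<exists>P. is_period (w m d) T P"
  then obtain P where P: "is_period (w m d) T P" by blast
  show "w_transient m d \<le> T"
  proof (rule ccontr)
    let ?n = "w_transient m d - 1"
    assume "\<not> w_transient m d \<le> T"
    then have "w m d (?n + P * rho m) = 1"
      using is_period_iterate[OF P, of ?n "rho m"] w_last_one[OF assms] by simp
    moreover have "?n + P * rho m = rho m * (kk m - pr m d - 1 + P) + d"
      unfolding w_transient_def by (simp add: algebra_simps)
    moreover have "1 \<le> P" using P unfolding is_period_def by simp
    ultimately show False
      using w_late_zero[OF assms, of "?n + P * rho m"] assms by (simp add: w_transient_def)
  qed
qed

text \<open>Every period from \<open>w_transient\<close> on is a multiple of \<open>\<rho>\<close>: otherwise some shift by a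
  multiple of the period would carry a one of a track \<open>> d\<close> into the zero tracks \<open>\<le> d\<close>.\<close>
lemma rho_dvd_period:
  assumes "rho m \<ge> 2" "d + 2 \<le> rho m" "is_period (w m d) (w_transient m d) Q"
  shows "rho m dvd Q"
proof (rule ccontr)
  let ?r = "rho m" and ?g = "gcd Q (rho m)"
  assume "\<not> ?r dvd Q"
  have Q0: "0 < Q" using assms(3) unfolding is_period_def by simp
  then have "0 < ?g" by simp
  moreover have "?g < ?r"
    using \<open>\<not> ?r dvd Q\<close> assms(1) by (metis gcd_dvd1 gcd_dvd2 dvd_imp_le le_neq_implies_less not_numeral_le_zero neq0_conv)
  ultimately obtain c c' where c: "d < c" "c < ?r" "c' \<le> d" "[c = c'] (mod ?g)"
    using classes_across_threshold[of ?g ?r d] assms(2) by auto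
  obtain n where n: "w_transient m d \<le> n" "n mod ?r = c" "w m d n = 1"
    using w_recurring_ones[OF assms(1) c(1,2)] by blast
  have "[n = c] (mod ?r)" using n(2) c(2) by (simp add: cong_def)
  then have "[n = c] (mod ?g)" by (rule cong_dvd_modulus_nat) simp
  then have "[n = c'] (mod ?g)" using c(4) by (rule cong_trans)
  then obtain x where "[n + Q * x = c'] (mod ?r)" using reachable_residue assms(1) by fastforce
  then have "(n + Q * x) mod ?r = c'" using c(1-3) by (simp add: cong_def)
  then have "w m d (n + Q * x) = 0" using w_late_zero[OF assms(1)] assms(2) n(1) c(3) by simp
  moreover have "w m d (n + Q * x) = w m d n" by (rule is_period_iterate[OF assms(3) n(1)])
  ultimately show False using n(3) by simp
qed

text \<open>... and a multiple of every \<open>p\<^sub>i\<close>, \<open>i > d\<close>, because track \<open>i\<close> is a class pattern mod \<open>p\<^sub>i\<close>.\<close>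
lemma cycle_length_w:
  assumes "rho m \<ge> 2" "d < rho m"
  shows "cycle_length (w m d) = L0 m d"
  unfolding cycle_length_def transient_length_w[OF assms]
proof (rule Least_equality)
  show "is_period (w m d) (w_transient m d) (L0 m d)" by (rule w_period[OF assms])
next
  fix Q assume Q: "is_period (w m d) (w_transient m d) Q"
  show "L0 m d \<le> Q"
  proof (cases "d + 2 \<le> rho m")
    case False
    then show ?thesis using Q unfolding L0_def is_period_def by simp
  next
    case True
    let ?r = "rho m" and ?L = "Lcm (pr m ` {0..d})"
    obtain q where q: "Q = ?r * q" using rho_dvd_period[OF assms(1) True Q] by blast
    have "0 < q" using q Q unfolding is_period_def by (cases q) auto
    have dvd_q: "pr m i dvd q" if "i \<in> {d+1..rho m - 1}" for i
    proof -
      have i: "d < i" "i < ?r" using that assms by auto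
      obtain n where n: "w_transient m d \<le> n" "n mod ?r = i" "w m d n = 1"
        using w_recurring_ones[OF assms(1) i] by blast
      let ?pattern = "class_pattern (pr m i) (1 + ?L) (kk m)"
      have shifted_one: "w m d (n + Q) = 1" using Q n unfolding is_period_def by simp
      have "?pattern (n div ?r) = 1" using w_upper_track[OF assms(1), of d n] n(2,3) i by simp
      moreover have "?pattern (n div ?r + q) = 1"
        using w_upper_track[OF assms(1), of d "n + Q"] shifted_one n(2) i unfolding q
        by (simp add: add.commute)
      ultimately show "pr m i dvd q" by (rule class_pattern_shift_dvd)
    qed
    have "Lcm (pr m ` {d+1..rho m - 1}) dvd q" by (rule Lcm_least) (use dvd_q in blast)
    then show ?thesis unfolding L0_def q using True \<open>0 < q\<close> by (simp add: dvd_imp_le)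
  qed
qed

theorem lemma13:
  fixes m :: nat
  assumes "0 < m" and "rho m \<ge> 2"
  shows "\<forall>d < rho m.
           eventually_periodic (\<lambda>n. w m d n) \<and>
           transient_length (\<lambda>n. w m d n) = rho m * (kk m - pr m d - 1) + d + 1 \<and>
           cycle_length (\<lambda>n. w m d n) = L0 m d"
proof (intro allI impI conjI)
  fix d assume d: "d < rho m"
  show "eventually_periodic (\<lambda>n. w m d n)"
    unfolding eventually_periodic_def using w_period[OF assms(2) d] by blast
  show "transient_length (\<lambda>n. w m d n) = rho m * (kk m - pr m d - 1) + d + 1"
    using transient_length_w[OF assms(2) d] by (simp add: w_transient_def)
  show "cycle_length (\<lambda>n. w m d n) = L0 m d"
    using cycle_length_w[OF assms(2) d] by simp
qed

end
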